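(* Fix an agent $k$ and coefficients $W_{i,j}\in[-1,1]$, $i,j\in[m_k]$, and suppose there are $\varepsilon',\varepsilon''\ge0$ such that $W_{i,i}\ge\max\{W_{i,j}-\varepsilon',-\varepsilon''\}$ for all $i,j\in[m_k]$. Let $(q^*_{i,j})_{i,j\in[m_k]}$ be an optimal solution of the program $(P^3)$ with these coefficients. Then for all $i,j\in[m_k]$: if $q^*_{i,j}>0$ then $W_{i,j}\ge W_{i,i}-m\varepsilon'-\sqrt2\,m\gamma$.
   Context: Agent $k$ has a finite type support $\{t_k^{(1)},\dots,t_k^{(m_k)}\}$ with probabilities $F_i>0$ summing to 1; $m=\max_{k'}m_{k'}$ (so $m\ge m_k$). With $\gamma>0$ and $\phi(\mathbf{q})=\frac12\gamma\|\mathbf{q}\|_2^2$, program $(P^3)$: maximize $\sum_i F_i(\sum_j W_{i,j}q_{i,j}-\phi(\mathbf{q}_i))$ subject to $\sum_j q_{i,j}=1$ for all $i$, $\sum_iF_iq_{i,j}=F_j$ for all $j$, $q_{i,j}\ge0$, where $\mathbf{q}_i=(q_{i,j})_j$. *)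

theory Defs
  imports Complex_Main
begin

text \<open>Types of agent k are indexed by {..<n} (n = m_k). F is the type distribution,
 W the coefficient matrix, q a candidate solution of program (P^3).\<close>

definition phi :: "real \<Rightarrow> nat \<Rightarrow> (nat \<Rightarrow> real) \<Rightarrow> real" where
  "phi \<gamma> n v = (1/2) * \<gamma> * (\<Sum>j<n. (v j)^2)"

definition P3_feasible :: "nat \<Rightarrow> (nat \<Rightarrow> real) \<Rightarrow> (nat \<Rightarrow> nat \<Rightarrow> real) \<Rightarrow> bool" where
  "P3_feasible n F q \<longleftrightarrow>
     (\<forall>i<n. (\<Sum>j<n. q i j) = 1) \<and>
     (\<forall>j<n. (\<Sum>i<n. F i * q i j) = F j) \<and>
     (\<forall>i<n. \<forall>j<n. q i j \<ge> 0)"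

definition P3_objective :: "nat \<Rightarrow> (nat \<Rightarrow> real) \<Rightarrow> (nat \<Rightarrow> nat \<Rightarrow> real) \<Rightarrow> real
    \<Rightarrow> (nat \<Rightarrow> nat \<Rightarrow> real) \<Rightarrow> real" where
  "P3_objective n F W \<gamma> q = (\<Sum>i<n. F i * ((\<Sum>j<n. W i j * q i j) - phi \<gamma> n (q i)))"

definition P3_optimal :: "nat \<Rightarrow> (nat \<Rightarrow> real) \<Rightarrow> (nat \<Rightarrow> nat \<Rightarrow> real) \<Rightarrow> real
    \<Rightarrow> (nat \<Rightarrow> nat \<Rightarrow> real) \<Rightarrow> bool" where
  "P3_optimal n F W \<gamma> q \<longleftrightarrow> P3_feasible n F q \<and>
     (\<forall>q'. P3_feasible n F q' \<longrightarrow> P3_objective n F W \<gamma> q' \<le> P3_objective n F W \<gamma> q)"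

end

theory Submission
  imports Defs
begin

(* Shifting, in every row a of an optimal q, a small amount of mass from an entry (a,b) with
   q a b > 0 to the diagonal entry (a,a), reweighted by 1/F a, preserves the column constraints
   exactly when the shifted amounts form a circulation in the support graph of q.  Hence no such
   circulation has positive first-order gain, the gain of the entry (a,b) being
   (W a a - \<gamma> q a a) - (W a b - \<gamma> q a b), which is at least -(\<epsilon>' + \<gamma>).
   Flow conservation with F > 0 also shows that if q i j > 0 then j reaches i in the support
   graph, along a simple path with at most n - 1 edges.  Closing this path by the edge (i,j)
   gives a cycle, and its gain being nonpositive yields
   W i i - W i j \<le> \<gamma> + (n - 1)(\<epsilon>' + \<gamma>) \<le> m \<epsilon>' + m \<gamma>. *)

definition circulation :: "nat \<Rightarrow> (nat \<Rightarrow> nat \<Rightarrow> real) \<Rightarrow> bool" where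
  "circulation n N \<longleftrightarrow>
     (\<forall>a b. 0 \<le> N a b) \<and> (\<forall>c<n. (\<Sum>b<n. N c b) = (\<Sum>a<n. N a c))"

definition shift_to_diagonal ::
    "nat \<Rightarrow> (nat \<Rightarrow> real) \<Rightarrow> (nat \<Rightarrow> nat \<Rightarrow> real) \<Rightarrow> nat \<Rightarrow> nat \<Rightarrow> real" where
  "shift_to_diagonal n F N a b = ((if a = b then \<Sum>c<n. N a c else 0) - N a b) / F a"

(* W a b - \<gamma> * q a b is the partial derivative of the objective in q a b, divided by F a. *)
definition diagonal_gain ::
    "(nat \<Rightarrow> nat \<Rightarrow> real) \<Rightarrow> real \<Rightarrow> (nat \<Rightarrow> nat \<Rightarrow> real) \<Rightarrow> nat \<Rightarrow> nat \<Rightarrow> real" where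
  "diagonal_gain W \<gamma> q a b = (W a a - \<gamma> * q a a) - (W a b - \<gamma> * q a b)"

lemma P3_objective_add_scaled:
  "P3_objective n F W \<gamma> (\<lambda>a b. q a b + \<delta> * D a b) = P3_objective n F W \<gamma> q
     + \<delta> * (\<Sum>a<n. F a * (\<Sum>b<n. (W a b - \<gamma> * q a b) * D a b))
     - \<delta>\<^sup>2 * (\<gamma> / 2 * (\<Sum>a<n. F a * (\<Sum>b<n. (D a b)\<^sup>2)))"
proof -
  have row: "(\<Sum>b<n. W a b * (q a b + \<delta> * D a b)) - phi \<gamma> n (\<lambda>b. q a b + \<delta> * D a b)
      = (\<Sum>b<n. W a b * q a b) - phi \<gamma> n (q a)
        + \<delta> * (\<Sum>b<n. (W a b - \<gamma> * q a b) * D a b) - \<delta>\<^sup>2 * (\<gamma> / 2 * (\<Sum>b<n. (D a b)\<^sup>2))" for a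
    by (simp add: phi_def power2_sum algebra_simps sum.distrib sum_subtractf sum_distrib_left)
  show ?thesis
    unfolding P3_objective_def row
    by (simp add: algebra_simps sum.distrib sum_subtractf sum_distrib_left)
qed

lemma shift_to_diagonal_pairing:
  assumes "\<forall>a<n. F a \<noteq> 0"
  shows "(\<Sum>a<n. F a * (\<Sum>b<n. g a b * shift_to_diagonal n F N a b))
       = (\<Sum>a<n. \<Sum>b<n. N a b * (g a a - g a b))"
proof (rule sum.cong[OF refl])
  fix a assume "a \<in> {..<n}"
  then have "a < n" "F a \<noteq> 0"
    using assms by auto
  then have "F a * (\<Sum>b<n. g a b * shift_to_diagonal n F N a b)
      = (\<Sum>b<n. g a b * ((if a = b then \<Sum>c<n. N a c else 0) - N a b))"
    by (simp add: shift_to_diagonal_def sum_distrib_left)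
  also have "\<dots> = (\<Sum>b<n. g a b * (if a = b then \<Sum>c<n. N a c else 0)) - (\<Sum>b<n. g a b * N a b)"
    by (simp add: right_diff_distrib sum_subtractf)
  also have "\<dots> = (\<Sum>b<n. N a b * (g a a - g a b))"
    using \<open>a < n\<close>
    by (simp add: sum_distrib_left sum_subtractf algebra_simps if_distrib cong: if_cong)
  finally show "F a * (\<Sum>b<n. g a b * shift_to_diagonal n F N a b) = \<dots>" .
qed

lemma shift_to_diagonal_nonneg_off_support:
  assumes "\<forall>a<n. 0 < F a" and "circulation n N" and "a < n" and "N a b \<le> 0"
  shows "0 \<le> shift_to_diagonal n F N a b"
proof -
  have "N a b = 0" and "N a a \<le> (\<Sum>c<n. N a c)"
    using assms by (auto simp: circulation_def intro: antisym member_le_sum)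
  then show ?thesis
    using assms by (auto simp: shift_to_diagonal_def)
qed

lemma eventually_nonneg_add_scaled:
  fixes x d :: real
  assumes "0 \<le> x" and "x = 0 \<Longrightarrow> 0 \<le> d"
  shows "\<forall>\<^sub>F \<delta> in at_right 0. 0 \<le> x + \<delta> * d"
proof (cases "x = 0")
  case True
  then show ?thesis
    using assms eventually_at_right_less[of 0] by (auto elim: eventually_mono)
next
  case False
  have "((\<lambda>\<delta>. x + \<delta> * d) \<longlongrightarrow> x + 0 * d) (at_right 0)"
    by (intro tendsto_intros)
  then have "\<forall>\<^sub>F \<delta> in at_right 0. 0 < x + \<delta> * d"
    using assms False by (simp add: order_tendstoD(1))
  then show ?thesis
    by (rule eventually_mono) simp
qed

lemma P3_feasible_shift_to_diagonal:
  assumes feas: "P3_feasible n F q" and Fpos: "\<forall>a<n. 0 < F a"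
    and circ: "circulation n N" and supp: "\<forall>a<n. \<forall>b<n. 0 < N a b \<longrightarrow> 0 < q a b"
  shows "\<forall>\<^sub>F \<delta> in at_right 0. P3_feasible n F (\<lambda>a b. q a b + \<delta> * shift_to_diagonal n F N a b)"
proof -
  define D where "D = shift_to_diagonal n F N"
  have rows: "(\<Sum>b<n. D a b) = 0" if "a < n" for a
    using that by (simp add: D_def shift_to_diagonal_def sum_divide_distrib[symmetric] sum_subtractf)
  have cols: "(\<Sum>a<n. F a * D a b) = 0" if "b < n" for b
  proof -
    have "(\<Sum>a<n. F a * D a b) = (\<Sum>a<n. (if a = b then \<Sum>c<n. N a c else 0) - N a b)"
      using Fpos by (intro sum.cong) (auto simp: D_def shift_to_diagonal_def)
    then show ?thesis
      using that circ by (simp add: sum_subtractf circulation_def)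
  qed
  have "\<forall>\<^sub>F \<delta> in at_right 0. 0 \<le> q a b + \<delta> * D a b" if "a < n" "b < n" for a b
  proof (rule eventually_nonneg_add_scaled)
    show "0 \<le> q a b"
      using that feas by (simp add: P3_feasible_def)
    assume "q a b = 0"
    then have "N a b \<le> 0"
      using that supp by (metis less_irrefl not_less)
    then show "0 \<le> D a b"
      unfolding D_def by (rule shift_to_diagonal_nonneg_off_support[OF Fpos circ \<open>a < n\<close>])
  qed
  then have "\<forall>\<^sub>F \<delta> in at_right 0. \<forall>(a, b) \<in> {..<n} \<times> {..<n}. 0 \<le> q a b + \<delta> * D a b"
    by (intro eventually_ball_finite) auto
  then show ?thesis
  proof (rule eventually_mono)
    fix \<delta> assume "\<forall>(a, b) \<in> {..<n} \<times> {..<n}. 0 \<le> q a b + \<delta> * D a b"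
    then show "P3_feasible n F (\<lambda>a b. q a b + \<delta> * shift_to_diagonal n F N a b)"
      using feas rows cols
      by (simp add: P3_feasible_def D_def sum.distrib sum_distrib_left[symmetric] algebra_simps)
  qed
qed

lemma first_order_coeff_nonpos:
  fixes G Q :: real
  assumes "\<forall>\<^sub>F \<delta> in at_right 0. \<delta> * G - \<delta>\<^sup>2 * Q \<le> 0"
  shows "G \<le> 0"
proof (rule tendsto_lowerbound)
  show "((\<lambda>\<delta>. \<delta> * Q) \<longlongrightarrow> 0) (at_right 0)"
    by (auto intro: tendsto_eq_intros)
  show "\<forall>\<^sub>F \<delta> in at_right 0. G \<le> \<delta> * Q"
    using assms eventually_at_right_less[of 0]
  proof eventually_elim
    case (elim \<delta>)
    then have "\<delta> * G \<le> \<delta> * (\<delta> * Q)"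
      by (simp add: power2_eq_square mult.assoc)
    then show ?case
      using elim by simp
  qed
qed simp

lemma P3_optimal_circulation_gain_nonpos:
  assumes opt: "P3_optimal n F W \<gamma> q" and Fpos: "\<forall>a<n. 0 < F a"
    and circ: "circulation n N" and supp: "\<forall>a<n. \<forall>b<n. 0 < N a b \<longrightarrow> 0 < q a b"
  shows "(\<Sum>a<n. \<Sum>b<n. N a b * diagonal_gain W \<gamma> q a b) \<le> 0"
proof -
  define D where "D = shift_to_diagonal n F N"
  define G where "G = (\<Sum>a<n. F a * (\<Sum>b<n. (W a b - \<gamma> * q a b) * D a b))"
  define Q where "Q = \<gamma> / 2 * (\<Sum>a<n. F a * (\<Sum>b<n. (D a b)\<^sup>2))"
  have "\<forall>\<^sub>F \<delta> in at_right 0. P3_feasible n F (\<lambda>a b. q a b + \<delta> * D a b)"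
    unfolding D_def using opt Fpos circ supp
    by (intro P3_feasible_shift_to_diagonal) (auto simp: P3_optimal_def)
  then have "\<forall>\<^sub>F \<delta> in at_right 0. \<delta> * G - \<delta>\<^sup>2 * Q \<le> 0"
  proof (rule eventually_mono)
    fix \<delta> assume "P3_feasible n F (\<lambda>a b. q a b + \<delta> * D a b)"
    then have "P3_objective n F W \<gamma> (\<lambda>a b. q a b + \<delta> * D a b) \<le> P3_objective n F W \<gamma> q"
      using opt by (simp add: P3_optimal_def)
    then show "\<delta> * G - \<delta>\<^sup>2 * Q \<le> 0"
      by (simp add: P3_objective_add_scaled G_def Q_def)
  qed
  then have "G \<le> 0"
    by (rule first_order_coeff_nonpos)
  moreover have "G = (\<Sum>a<n. \<Sum>b<n. N a b * diagonal_gain W \<gamma> q a b)"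
    using Fpos unfolding G_def D_def diagonal_gain_def
    by (subst shift_to_diagonal_pairing) auto
  ultimately show ?thesis
    by simp
qed

lemma P3_feasible_row_sum_closed_set:
  assumes feas: "P3_feasible n F q" and S: "S \<subseteq> {..<n}"
    and closed: "\<forall>a\<in>S. \<forall>b<n. 0 < q a b \<longrightarrow> b \<in> S" and "a \<in> S"
  shows "(\<Sum>b\<in>S. q a b) = 1"
proof -
  have "a < n"
    using S \<open>a \<in> S\<close> by auto
  have "q a b = 0" if "b \<in> {..<n} - S" for b
  proof -
    have "\<not> 0 < q a b"
      using closed \<open>a \<in> S\<close> that by blast
    moreover have "0 \<le> q a b"
      using feas \<open>a < n\<close> that by (simp add: P3_feasible_def)
    ultimately show ?thesis
      by simp
  qed
  then have "(\<Sum>b<n. q a b) = (\<Sum>b\<in>S. q a b)"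
    using S by (simp add: sum.subset_diff[of S "{..<n}"])
  then show ?thesis
    using feas \<open>a < n\<close> by (simp add: P3_feasible_def)
qed

(* Rows in S keep all their mass inside S, so by the column constraints no mass can enter S
   from outside. *)
lemma P3_feasible_closed_set_backward:
  assumes feas: "P3_feasible n F q" and Fpos: "\<forall>a<n. 0 < F a"
    and S: "S \<subseteq> {..<n}" and closed: "\<forall>a\<in>S. \<forall>b<n. 0 < q a b \<longrightarrow> b \<in> S"
    and "i < n" "j \<in> S" "0 < q i j"
  shows "i \<in> S"
proof (rule ccontr)
  assume "i \<notin> S"
  define T where "T = {..<n} - S"
  have finS: "finite S" and finT: "finite T"
    using S by (auto simp: T_def finite_subset)
  have nonneg: "0 \<le> F a * q a b" if "a < n" "b < n" for a b
    using feas Fpos that by (simp add: P3_feasible_def less_imp_le)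
  have "(\<Sum>b\<in>S. F b) = (\<Sum>b\<in>S. \<Sum>a<n. F a * q a b)"
    using feas S by (intro sum.cong) (auto simp: P3_feasible_def)
  also have "\<dots> = (\<Sum>a<n. \<Sum>b\<in>S. F a * q a b)"
    by (rule sum.swap)
  also have "\<dots> = (\<Sum>a\<in>S. F a * (\<Sum>b\<in>S. q a b)) + (\<Sum>a\<in>T. \<Sum>b\<in>S. F a * q a b)"
    using S by (simp add: T_def sum.subset_diff[of S "{..<n}"] sum_distrib_left)
  also have "\<dots> = (\<Sum>b\<in>S. F b) + (\<Sum>a\<in>T. \<Sum>b\<in>S. F a * q a b)"
    using P3_feasible_row_sum_closed_set[OF feas S closed] by simp
  finally have "(\<Sum>a\<in>T. \<Sum>b\<in>S. F a * q a b) = 0"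
    by simp
  moreover have "0 < (\<Sum>a\<in>T. \<Sum>b\<in>S. F a * q a b)"
  proof (rule sum_pos2[OF finT])
    show "i \<in> T"
      using \<open>i < n\<close> \<open>i \<notin> S\<close> by (simp add: T_def)
    show "0 < (\<Sum>b\<in>S. F i * q i b)"
      using finS \<open>j \<in> S\<close> \<open>0 < q i j\<close> \<open>i < n\<close> Fpos S nonneg
      by (intro sum_pos2[of S j]) auto
    show "0 \<le> (\<Sum>b\<in>S. F a * q a b)" if "a \<in> T" for a
      using that S nonneg by (auto simp: T_def intro!: sum_nonneg)
  qed
  ultimately show False
    by simp
qed

lemma successively_remove_loops:
  assumes "vs \<noteq> []" "successively P vs"
  shows "\<exists>us. us \<noteq> [] \<and> successively P us \<and> distinct us \<and> set us \<subseteq> set vs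
           \<and> hd us = hd vs \<and> last us = last vs"
  using assms
proof (induction vs rule: length_induct)
  case (1 vs)
  show ?case
  proof (cases "distinct vs")
    case False
    then obtain xs y ys zs where vs: "vs = xs @ [y] @ ys @ [y] @ zs"
      using not_distinct_decomp by blast
    have "successively P ((xs @ [y]) @ (ys @ [y] @ zs))"
      "successively P ((xs @ [y] @ ys) @ (y # zs))"
      using "1.prems" by (simp_all add: vs)
    then have "successively P (xs @ [y])" "successively P (y # zs)"
      unfolding successively_append_iff by blast+
    define ws where "ws = xs @ [y] @ zs"
    have "successively P ws"
      using \<open>successively P (xs @ [y])\<close> \<open>successively P (y # zs)\<close> unfolding ws_def
      by (auto simp: successively_append_iff successively_Cons simp flip: append_assoc)
    moreover have "ws \<noteq> []" "length ws < length vs"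
      by (simp_all add: ws_def vs)
    ultimately obtain us where us: "us \<noteq> []" "successively P us" "distinct us"
      "set us \<subseteq> set ws" "hd us = hd ws" "last us = last ws"
      using "1.IH" by blast
    moreover have "set ws \<subseteq> set vs" "hd ws = hd vs" "last ws = last vs"
      by (auto simp: ws_def vs hd_append last_append)
    ultimately show ?thesis
      by (intro exI[of _ us]) auto
  qed (use "1.prems" in blast)
qed

lemma successively_zip_tl:
  "successively P vs \<Longrightarrow> (a, b) \<in> set (zip vs (tl vs)) \<Longrightarrow> P a b"
  by (induction P vs rule: successively.induct) auto

definition support_walk :: "nat \<Rightarrow> (nat \<Rightarrow> nat \<Rightarrow> real) \<Rightarrow> nat list \<Rightarrow> bool" where
  "support_walk n q vs \<longleftrightarrow> vs \<noteq> [] \<and> set vs \<subseteq> {..<n} \<and> successively (\<lambda>a b. 0 < q a b) vs"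

lemma support_walk_snoc:
  "support_walk n q vs \<Longrightarrow> b < n \<Longrightarrow> 0 < q (last vs) b \<Longrightarrow> support_walk n q (vs @ [b])"
  by (simp add: support_walk_def successively_append_iff)

lemma support_walk_ends:
  "support_walk n q vs \<Longrightarrow> hd vs < n \<and> last vs < n"
  unfolding support_walk_def by (meson hd_in_set last_in_set lessThan_iff subsetD)

lemma support_walk_edge:
  "support_walk n q vs \<Longrightarrow> (a, b) \<in> set (zip vs (tl vs)) \<Longrightarrow> a < n \<and> b < n \<and> 0 < q a b"
  by (auto simp: support_walk_def dest: successively_zip_tl set_zip_leftD set_zip_rightD
      list.set_sel(2))

lemma P3_feasible_support_walk_back:
  assumes feas: "P3_feasible n F q" and Fpos: "\<forall>a<n. 0 < F a"
    and "i < n" "j < n" "0 < q i j"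
  shows "\<exists>vs. support_walk n q vs \<and> hd vs = j \<and> last vs = i \<and> length vs \<le> n"
proof -
  define S where "S = {b. \<exists>vs. support_walk n q vs \<and> hd vs = j \<and> last vs = b}"
  have "S \<subseteq> {..<n}"
    by (auto simp: S_def dest: support_walk_ends)
  moreover have "\<forall>a\<in>S. \<forall>b<n. 0 < q a b \<longrightarrow> b \<in> S"
  proof (intro ballI allI impI)
    fix a b assume "a \<in> S" "b < n" "0 < q a b"
    then obtain vs where "support_walk n q vs" "hd vs = j" "last vs = a"
      by (auto simp: S_def)
    moreover from this have "support_walk n q (vs @ [b])"
      using \<open>b < n\<close> \<open>0 < q a b\<close> by (intro support_walk_snoc) auto
    ultimately show "b \<in> S"
      unfolding S_def by (auto simp: support_walk_def intro!: exI[of _ "vs @ [b]"])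
  qed
  moreover have "j \<in> S"
    using \<open>j < n\<close> by (auto simp: S_def support_walk_def intro!: exI[of _ "[j]"])
  ultimately have "i \<in> S"
    using P3_feasible_closed_set_backward[OF feas Fpos] assms(3-) by blast
  then obtain vs where "support_walk n q vs" "hd vs = j" "last vs = i"
    by (auto simp: S_def)
  then obtain us where "us \<noteq> []" "successively (\<lambda>a b. 0 < q a b) us" "distinct us"
    "set us \<subseteq> set vs" "hd us = j" "last us = i"
    unfolding support_walk_def using successively_remove_loops by blast
  with \<open>support_walk n q vs\<close>
  have us: "support_walk n q us" "distinct us" "hd us = j" "last us = i"
    by (auto simp: support_walk_def)
  then have "length us \<le> n"
    unfolding support_walk_def by (metis card_lessThan card_mono distinct_card finite_lessThan)
  with us show ?thesis
    by blast
qed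

lemma sum_count_list:
  fixes f :: "'a \<Rightarrow> 'b::comm_semiring_1"
  assumes "finite A" "set xs \<subseteq> A"
  shows "(\<Sum>x\<in>A. of_nat (count_list xs x) * f x) = (\<Sum>x\<leftarrow>xs. f x)"
  using assms(2)
proof (induction xs)
  case (Cons y xs)
  have "(\<Sum>x\<in>A. of_nat (count_list (y # xs) x) * f x)
      = (\<Sum>x\<in>A. of_nat (count_list xs x) * f x) + (\<Sum>x\<in>A. if y = x then f x else 0)"
    unfolding sum.distrib[symmetric] by (rule sum.cong) (auto simp: algebra_simps)
  then show ?case
    using Cons assms(1) by (simp add: add.commute)
qed simp

lemma sum_list_of_bool_eq_count_list:
  "(\<Sum>x\<leftarrow>xs. of_bool (x = c)) = (of_nat (count_list xs c) :: 'a::semiring_1)"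
  by (induction xs) auto

lemma sum_count_list_pairs:
  fixes g :: "nat \<Rightarrow> nat \<Rightarrow> real"
  assumes "set es \<subseteq> {..<n} \<times> {..<n}"
  shows "(\<Sum>a<n. \<Sum>b<n. real (count_list es (a, b)) * g a b) = (\<Sum>(a, b)\<leftarrow>es. g a b)"
  using sum_count_list[OF _ assms, of "case_prod g"]
  by (simp add: sum.cartesian_product split_def)

lemma circulation_count_list:
  assumes es: "set es \<subseteq> {..<n} \<times> {..<n}"
    and balanced: "count_list (map fst es) = count_list (map snd es)"
  shows "circulation n (\<lambda>a b. real (count_list es (a, b)))"
  unfolding circulation_def
proof (intro conjI allI impI)
  fix c assume "c < n"
  have "(\<Sum>b<n. real (count_list es (c, b)))
      = (\<Sum>a<n. \<Sum>b<n. real (count_list es (a, b)) * of_bool (a = c))"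
    using \<open>c < n\<close> by (simp add: sum_distrib_right[symmetric])
  also have "\<dots> = real (count_list (map fst es) c)"
    by (subst sum_count_list_pairs[OF es])
      (simp add: split_def comp_def flip: sum_list_of_bool_eq_count_list)
  also have "\<dots> = real (count_list (map snd es) c)"
    by (simp add: balanced)
  also have "\<dots> = (\<Sum>a<n. \<Sum>b<n. real (count_list es (a, b)) * of_bool (b = c))"
    by (subst sum_count_list_pairs[OF es])
      (simp add: split_def comp_def flip: sum_list_of_bool_eq_count_list)
  also have "\<dots> = (\<Sum>a<n. real (count_list es (a, c)))"
    using \<open>c < n\<close> by simp
  finally show "(\<Sum>b<n. real (count_list es (c, b))) = (\<Sum>a<n. real (count_list es (a, c)))" .
qed simp

lemma P3_optimal_cycle_gain_nonpos:
  assumes opt: "P3_optimal n F W \<gamma> q" and Fpos: "\<forall>a<n. 0 < F a"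
    and walk: "support_walk n q vs" and closing: "0 < q (last vs) (hd vs)"
  shows "diagonal_gain W \<gamma> q (last vs) (hd vs)
           + (\<Sum>(a, b)\<leftarrow>zip vs (tl vs). diagonal_gain W \<gamma> q a b) \<le> 0"
proof -
  define es where "es = (last vs, hd vs) # zip vs (tl vs)"
  have es_support: "a < n \<and> b < n \<and> 0 < q a b" if "(a, b) \<in> set es" for a b
    using that closing support_walk_ends[OF walk] support_walk_edge[OF walk]
    by (auto simp: es_def)
  then have es: "set es \<subseteq> {..<n} \<times> {..<n}"
    by auto
  have "vs \<noteq> []"
    using walk by (simp add: support_walk_def)
  then have "map fst es = last vs # butlast vs" "map snd es = vs"
    by (auto simp: es_def map_fst_zip_take map_snd_zip_take butlast_conv_take)
  moreover have "count_list (last vs # butlast vs) = count_list (butlast vs @ [last vs])"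
    by (simp add: fun_eq_iff)
  ultimately have "count_list (map fst es) = count_list (map snd es)"
    using append_butlast_last_id[OF \<open>vs \<noteq> []\<close>] by simp
  then have "circulation n (\<lambda>a b. real (count_list es (a, b)))"
    by (rule circulation_count_list[OF es])
  moreover have "\<forall>a<n. \<forall>b<n. 0 < real (count_list es (a, b)) \<longrightarrow> 0 < q a b"
    using es_support count_notin by fastforce
  ultimately have "(\<Sum>a<n. \<Sum>b<n. real (count_list es (a, b)) * diagonal_gain W \<gamma> q a b) \<le> 0"
    by (rule P3_optimal_circulation_gain_nonpos[OF opt Fpos])
  then show ?thesis
    unfolding sum_count_list_pairs[OF es] by (simp add: es_def)
qed

lemma diagonal_gain_ge:
  assumes "P3_feasible n F q" "0 \<le> \<gamma>" "a < n" "b < n"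
  shows "W a a - W a b - \<gamma> \<le> diagonal_gain W \<gamma> q a b"
proof -
  have "q a a \<le> (\<Sum>c<n. q a c)"
    using assms by (intro member_le_sum) (auto simp: P3_feasible_def)
  then have "\<gamma> * q a a \<le> \<gamma>"
    using assms by (simp add: P3_feasible_def mult_left_le)
  moreover have "0 \<le> \<gamma> * q a b"
    using assms by (simp add: P3_feasible_def)
  ultimately show ?thesis
    by (simp add: diagonal_gain_def)
qed

lemma P3_optimal_diagonal_gap_le:
  assumes opt: "P3_optimal n F W \<gamma> q" and Fpos: "\<forall>a<n. 0 < F a" and "0 \<le> \<gamma>"
    and diag: "\<forall>a<n. \<forall>b<n. W a b - \<epsilon> \<le> W a a"
    and "i < n" "j < n" "0 < q i j"
  shows "W i i - W i j \<le> \<gamma> + real (n - 1) * (\<epsilon> + \<gamma>)"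
proof -
  have feas: "P3_feasible n F q"
    using opt by (simp add: P3_optimal_def)
  obtain vs where walk: "support_walk n q vs" and ends: "hd vs = j" "last vs = i"
    and len: "length vs \<le> n"
    using P3_feasible_support_walk_back[OF feas Fpos \<open>i < n\<close> \<open>j < n\<close> \<open>0 < q i j\<close>] by blast
  have "diagonal_gain W \<gamma> q i j + (\<Sum>(a, b)\<leftarrow>zip vs (tl vs). diagonal_gain W \<gamma> q a b) \<le> 0"
    using P3_optimal_cycle_gain_nonpos[OF opt Fpos walk] \<open>0 < q i j\<close> by (simp add: ends)
  moreover have "(\<Sum>(a, b)\<leftarrow>zip vs (tl vs). - (\<epsilon> + \<gamma>))
      \<le> (\<Sum>(a, b)\<leftarrow>zip vs (tl vs). diagonal_gain W \<gamma> q a b)"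
  proof (rule sum_list_mono, clarify)
    fix a b assume "(a, b) \<in> set (zip vs (tl vs))"
    then have "a < n" "b < n"
      using support_walk_edge[OF walk] by blast+
    then show "- (\<epsilon> + \<gamma>) \<le> diagonal_gain W \<gamma> q a b"
      using diagonal_gain_ge[OF feas \<open>0 \<le> \<gamma>\<close>, of a b W] diag by force
  qed
  moreover have "(\<Sum>(a, b)\<leftarrow>zip vs (tl vs). - (\<epsilon> + \<gamma>)) = - (\<epsilon> + \<gamma>) * real (length vs - 1)"
    by (simp add: sum_list_triv split_def)
  moreover have "W i i - W i j - \<gamma> \<le> diagonal_gain W \<gamma> q i j"
    using diagonal_gain_ge[OF feas \<open>0 \<le> \<gamma>\<close> \<open>i < n\<close> \<open>j < n\<close>] by simp
  moreover have "0 \<le> \<epsilon>"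
    using diag \<open>i < n\<close> by force
  then have "(\<epsilon> + \<gamma>) * real (length vs - 1) \<le> (\<epsilon> + \<gamma>) * real (n - 1)"
    using \<open>0 \<le> \<gamma>\<close> len by (intro mult_left_mono) auto
  ultimately show ?thesis
    by (simp add: algebra_simps)
qed

theorem mainTheorem11:
  fixes n m :: nat and F :: "nat \<Rightarrow> real" and W q :: "nat \<Rightarrow> nat \<Rightarrow> real"
    and \<gamma> \<epsilon>1 \<epsilon>2 :: real
  assumes Fpos: "\<forall>i<n. F i > 0"
    and Fsum: "(\<Sum>i<n. F i) = 1"
    and mge: "m \<ge> n"
    and gpos: "\<gamma> > 0"
    and Wbnd: "\<forall>i<n. \<forall>j<n. -1 \<le> W i j \<and> W i j \<le> 1"
    and e1: "\<epsilon>1 \<ge> 0" and e2: "\<epsilon>2 \<ge> 0"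
    and diag: "\<forall>i<n. \<forall>j<n. W i i \<ge> max (W i j - \<epsilon>1) (- \<epsilon>2)"
    and opt: "P3_optimal n F W \<gamma> q"
  shows "\<forall>i<n. \<forall>j<n. q i j > 0 \<longrightarrow>
           W i j \<ge> W i i - real m * \<epsilon>1 - sqrt 2 * real m * \<gamma>"
proof (intro allI impI)
  fix i j assume ij: "i < n" "j < n" "0 < q i j"
  have "W i i - W i j \<le> \<gamma> + real (n - 1) * (\<epsilon>1 + \<gamma>)"
    using P3_optimal_diagonal_gap_le[OF opt Fpos _ _ ij] gpos diag by simp
  also have "\<dots> \<le> real m * \<epsilon>1 + real m * \<gamma>"
  proof -
    have "real (n - 1) + 1 \<le> real m"
      using ij(1) mge by (simp add: of_nat_diff)
    then show ?thesis
      using e1 gpos mult_left_mono[of "real (n - 1) + 1" "real m" \<gamma>]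
        mult_left_mono[of "real (n - 1)" "real m" \<epsilon>1]
      by (simp add: algebra_simps)
  qed
  also have "\<dots> \<le> real m * \<epsilon>1 + sqrt 2 * real m * \<gamma>"
    using mult_right_mono[of 1 "sqrt 2" "real m * \<gamma>"] gpos by (simp add: mult.assoc)
  finally show "W i i - real m * \<epsilon>1 - sqrt 2 * real m * \<gamma> \<le> W i j"
    by simp
qed

end
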